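(* Let $\mathcal{H}$ be a real Hilbert space and let $f,g\in \Gamma_0(\mathcal{H})$. Suppose that for some $x_0\in \operatorname{dom} f\cap \operatorname{dom} g$, $$\Vert \operatorname{prox}_f(x)-x_0\Vert\leq \Vert \operatorname{prox}_g(x)-x_0\Vert \quad \text{for all } x\in \mathcal{H}.$$ Then $g-g(x_0)\leq f-f(x_0)$ on $\mathcal{H}$.
   Context: $\Gamma_0(\mathcal{H})$ denotes the set of proper, convex, lower semicontinuous functions $\mathcal{H}\to\mathbb{R}\cup\{+\infty\}$. For $f\in\Gamma_0(\mathcal{H})$, $\operatorname{prox}_f(x)=\operatorname{argmin}_{y\in\mathcal{H}}\{f(y)+\tfrac12\Vert x-y\Vert^2\}$ (the minimizer exists and is unique). $\operatorname{dom} f=\{x: f(x)<+\infty\}$. *)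

theory Defs
  imports "HOL-Analysis.Analysis" "HOL-Library.Extended_Real"
begin

text \<open>Functions H -> R \<union> {+\<infinity>} are modelled as maps into ereal that never take the value -\<infinity>.\<close>

definition proper_fun :: "('a \<Rightarrow> ereal) \<Rightarrow> bool" where
  "proper_fun f \<longleftrightarrow> (\<forall>x. f x \<noteq> -\<infinity>) \<and> (\<exists>x. f x < \<infinity>)"

definition convex_fun :: "('a::real_vector \<Rightarrow> ereal) \<Rightarrow> bool" where
  "convex_fun f \<longleftrightarrow> (\<forall>x y. \<forall>t::real. 0 < t \<and> t < 1 \<longrightarrow>
      f ((1 - t) *\<^sub>R x + t *\<^sub>R y) \<le> ereal (1 - t) * f x + ereal t * f y)"

definition lsc_fun :: "('a::topological_space \<Rightarrow> ereal) \<Rightarrow> bool" where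
  "lsc_fun f \<longleftrightarrow> (\<forall>x. f x \<le> Liminf (at x) f)"

definition Gamma0 :: "('a::real_normed_vector \<Rightarrow> ereal) set" where
  "Gamma0 = {f. proper_fun f \<and> convex_fun f \<and> lsc_fun f}"

definition edom :: "('a \<Rightarrow> ereal) \<Rightarrow> 'a set" where
  "edom f = {x. f x < \<infinity>}"

definition prox :: "('a::real_normed_vector \<Rightarrow> ereal) \<Rightarrow> 'a \<Rightarrow> 'a" where
  "prox f x = (THE y. \<forall>z. f y + ereal ((norm (x - y))\<^sup>2 / 2) \<le> f z + ereal ((norm (x - z))\<^sup>2 / 2))"

end

theory Submission
  imports Defs
begin

(* For h in Gamma0 let Phi_h(x) = <x, prox_h x - x0> - h(prox_h x) - |prox_h x|^2/2, which is the
   conjugate of h + |.|^2/2 minus <., x0>. It is convex and 1-smooth with gradient prox_h - x0, and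
   by biconjugation its infimum is -(h(x0) + |x0|^2/2). The hypothesis says that the gradient of
   Phi_f is pointwise no longer than that of Phi_g. Running gradient descent on Phi_g from x, Phi_f
   can drop at most (1 + t) times as much as Phi_g, while Phi_f gets arbitrarily close to its
   infimum along the iterates; hence Phi_f - inf Phi_f <= Phi_g - inf Phi_g. Conjugating back
   (Fenchel-Young for f, biconjugation for g) gives g - g(x0) <= f - f(x0). *)

section \<open>Convex lower semicontinuous functions\<close>

lemma Gamma0D:
  assumes "h \<in> Gamma0"
  shows "convex_fun h" "lsc_fun h" "h x \<noteq> -\<infinity>" "\<exists>x a. h x = ereal a"
proof -
  show "convex_fun h" "lsc_fun h" "h x \<noteq> -\<infinity>"
    using assms by (auto simp: Gamma0_def proper_fun_def)
  obtain x where "h x < \<infinity>" "h x \<noteq> -\<infinity>"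
    using assms by (auto simp: Gamma0_def proper_fun_def)
  then show "\<exists>x a. h x = ereal a" by (cases "h x") auto
qed

lemma Gamma0_real_valued:
  assumes "h \<in> Gamma0" "h x \<noteq> \<infinity>"
  obtains a where "h x = ereal a"
  using assms Gamma0D(3)[OF assms(1), of x] by (cases "h x") auto

lemma convex_funD_ereal:
  assumes "convex_fun h" "h x = ereal a" "h y = ereal b" "0 < t" "t < 1"
  shows "h ((1 - t) *\<^sub>R x + t *\<^sub>R y) \<le> ereal ((1 - t) * a + t * b)"
  using assms unfolding convex_fun_def by (metis plus_ereal.simps(1) times_ereal.simps(1))

lemma lsc_fun_ball_greater:
  fixes h :: "'a::metric_space \<Rightarrow> ereal"
  assumes "lsc_fun h" "ereal c < h x"
  obtains \<rho> where "\<rho> > 0" "\<And>u. dist u x < \<rho> \<Longrightarrow> ereal c < h u"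
proof -
  have "ereal c < Liminf (at x) h"
    using assms unfolding lsc_fun_def by (meson less_le_trans)
  then have "ereal c < (SUP e\<in>{0<..}. INF y\<in>ball x e - {x}. h y)" by (simp add: Liminf_at)
  then obtain e where e: "e > 0" "ereal c < (INF y\<in>ball x e - {x}. h y)"
    by (auto simp: less_SUP_iff)
  have "ereal c < h u" if "dist u x < e" for u
  proof (cases "u = x")
    case False
    then have "u \<in> ball x e - {x}" using that by (simp add: dist_commute)
    then show ?thesis using e(2) by (meson INF_lower less_le_trans)
  qed (use assms in simp)
  with e(1) show thesis by (rule that)
qed

lemma lsc_fun_LIMSEQ_le:
  fixes h :: "'a::metric_space \<Rightarrow> ereal"
  assumes "lsc_fun h" "u \<longlonglongrightarrow> v" "\<And>n. h (u n) \<le> ereal (b n)" "b \<longlonglongrightarrow> \<beta>"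
  shows "h v \<le> ereal \<beta>"
proof (rule ccontr)
  assume "\<not> h v \<le> ereal \<beta>"
  then have "ereal \<beta> < h v" by simp
  then obtain c where c: "ereal \<beta> < ereal c" "ereal c < h v"
    using ereal_dense2 by blast
  obtain \<rho> where \<rho>: "\<rho> > 0" "\<And>w. dist w v < \<rho> \<Longrightarrow> ereal c < h w"
    using lsc_fun_ball_greater[OF assms(1) c(2)] by blast
  have "eventually (\<lambda>n. dist (u n) v < \<rho>) sequentially"
    using assms(2) \<rho>(1) by (rule tendstoD)
  then have "eventually (\<lambda>n. c \<le> b n) sequentially"
  proof eventually_elim
    case (elim n)
    then have "ereal c < ereal (b n)" using \<rho>(2) assms(3)[of n] by (meson less_le_trans)
    then show ?case by simp
  qed
  then have "c \<le> \<beta>" using assms(4) by (intro tendsto_lowerbound) auto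
  with c(1) show False by simp
qed

text \<open>Convexity propagates the lower bound that lower semicontinuity gives near a finite point
  to a bound that decreases only linearly with the distance.\<close>

lemma convex_lsc_cone_minorant:
  fixes h :: "'a::real_normed_vector \<Rightarrow> ereal"
  assumes conv: "convex_fun h" and lsc: "lsc_fun h" and nm: "\<And>x. h x \<noteq> -\<infinity>"
    and fin: "h x0 = ereal a"
  obtains B where "B \<ge> 0" "\<And>u. ereal (a - 1 - B * norm (u - x0)) \<le> h u"
proof -
  obtain \<rho> where \<rho>: "\<rho> > 0" "\<And>u. dist u x0 < \<rho> \<Longrightarrow> ereal (a - 1) < h u"
    using lsc_fun_ball_greater[OF lsc, of "a - 1" x0] fin by auto
  have "ereal (a - 1 - (2/\<rho>) * norm (u - x0)) \<le> h u" for u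
  proof (cases "norm (u - x0) < \<rho>")
    case True
    then have "ereal (a - 1) < h u" using \<rho>(2) by (simp add: dist_norm)
    moreover have "a - 1 - (2/\<rho>) * norm (u - x0) \<le> a - 1" using \<rho>(1) by simp
    ultimately show ?thesis by (meson ereal_less_eq(3) less_imp_le order_trans)
  next
    case False
    define d where "d = norm (u - x0)"
    have d: "d \<ge> \<rho>" using False d_def by simp
    define t where "t = \<rho> / (2 * d)"
    have t: "0 < t" "t < 1" "t * d = \<rho> / 2" "1 / t = (2 / \<rho>) * d"
      using d \<rho>(1) by (auto simp: t_def field_simps)
    have "(1 - t) *\<^sub>R x0 + t *\<^sub>R u - x0 = t *\<^sub>R (u - x0)" by (simp add: algebra_simps)
    then have "dist ((1 - t) *\<^sub>R x0 + t *\<^sub>R u) x0 = t * d"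
      using t(1) by (simp add: dist_norm d_def)
    then have hz: "ereal (a - 1) < h ((1 - t) *\<^sub>R x0 + t *\<^sub>R u)" using \<rho> t(3) by simp
    show ?thesis
    proof (cases "h u")
      case (real b)
      have "ereal (a - 1) < ereal ((1 - t) * a + t * b)"
        using hz convex_funD_ereal[OF conv fin real t(1,2)] by (rule less_le_trans)
      then have "a - 1 < (1 - t) * a + t * b" by simp
      then have "a - b < 1 / t" using t(1) by (simp add: field_simps)
      then show ?thesis using real t(4) d_def by simp
    qed (use nm in auto)
  qed
  then show thesis using \<rho>(1) by (intro that[of "2/\<rho>"]) auto
qed

lemma Gamma0_cone_minorant:
  fixes h :: "'a::real_normed_vector \<Rightarrow> ereal"
  assumes "h \<in> Gamma0"
  obtains A B where "B \<ge> 0" "\<And>u. ereal (A - B * norm (u - y)) \<le> h u"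
proof -
  obtain x1 a where x1: "h x1 = ereal a" using Gamma0D(4)[OF assms] by blast
  obtain B where B: "B \<ge> 0" "\<And>u. ereal (a - 1 - B * norm (u - x1)) \<le> h u"
    using convex_lsc_cone_minorant[OF Gamma0D(1,2,3)[OF assms] x1] by blast
  have "ereal (a - 1 - B * norm (y - x1) - B * norm (u - y)) \<le> h u" for u
  proof -
    have "norm (u - x1) \<le> norm (u - y) + norm (y - x1)" by (metis dist_norm dist_triangle)
    then have "B * norm (u - x1) \<le> B * norm (u - y) + B * norm (y - x1)"
      using B(1) by (metis distrib_left mult_left_mono)
    then have "a - 1 - B * norm (y - x1) - B * norm (u - y) \<le> a - 1 - B * norm (u - x1)"
      by linarith
    then show ?thesis using B(2)[of u] by (meson ereal_less_eq(3) order_trans)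
  qed
  with B(1) show thesis by (rule that)
qed

section \<open>Proximal points\<close>

definition prox_obj :: "('a::real_normed_vector \<Rightarrow> ereal) \<Rightarrow> real \<Rightarrow> 'a \<Rightarrow> 'a \<Rightarrow> ereal" where
  "prox_obj h l y u = h u + ereal ((norm (y - u))\<^sup>2 / (2 * l))"

definition proximal_point :: "('a::real_normed_vector \<Rightarrow> ereal) \<Rightarrow> real \<Rightarrow> 'a \<Rightarrow> 'a \<Rightarrow> bool" where
  "proximal_point h l y v \<longleftrightarrow> (\<forall>z. prox_obj h l y v \<le> prox_obj h l y z)"

lemma norm_diff_midpoint_sq:
  fixes a b y :: "'a::real_inner"
  shows "(norm (y - midpoint a b))\<^sup>2 = ((norm (y - a))\<^sup>2 + (norm (y - b))\<^sup>2) / 2 - (norm (a - b))\<^sup>2 / 4"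
  unfolding power2_norm_eq_inner midpoint_def
  by (simp add: inner_diff_left inner_diff_right inner_add_left inner_add_right inner_commute
      field_simps)

lemma prox_obj_midpoint:
  fixes h :: "'a::real_inner \<Rightarrow> ereal"
  assumes conv: "convex_fun h" and ha: "h a = ereal \<alpha>" and hb: "h b = ereal \<beta>" and l: "l > 0"
  shows "prox_obj h l y (midpoint a b) \<le> ereal ((\<alpha> + (norm (y - a))\<^sup>2 / (2*l)
    + \<beta> + (norm (y - b))\<^sup>2 / (2*l)) / 2 - (norm (a - b))\<^sup>2 / (8*l))"
proof -
  have "midpoint a b = (1 - 1/2) *\<^sub>R a + (1/2) *\<^sub>R b"
    by (simp add: midpoint_def scaleR_add_right)
  then have "h (midpoint a b) \<le> ereal ((\<alpha> + \<beta>) / 2)"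
    using convex_funD_ereal[OF conv ha hb, of "1/2"] by (simp add: add_divide_distrib)
  then have "prox_obj h l y (midpoint a b)
      \<le> ereal ((\<alpha> + \<beta>) / 2 + (norm (y - midpoint a b))\<^sup>2 / (2*l))"
    unfolding prox_obj_def by (metis add_right_mono plus_ereal.simps(1))
  also have "\<dots> = ereal ((\<alpha> + (norm (y - a))\<^sup>2 / (2*l)
      + \<beta> + (norm (y - b))\<^sup>2 / (2*l)) / 2 - (norm (a - b))\<^sup>2 / (8*l))"
    using l by (simp add: norm_diff_midpoint_sq field_simps)
  finally show ?thesis .
qed

lemma prox_obj_near_minimizers_close:
  fixes h :: "'a::real_inner \<Rightarrow> ereal"
  assumes conv: "convex_fun h" and nm: "\<And>x. h x \<noteq> -\<infinity>" and l: "l > 0"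
    and low: "\<And>z. ereal m \<le> prox_obj h l y z"
    and u: "prox_obj h l y u \<le> ereal (m + d)" and w: "prox_obj h l y w \<le> ereal (m + e)"
  shows "(norm (u - w))\<^sup>2 \<le> 4 * l * (d + e)"
proof -
  obtain \<alpha> where \<alpha>: "h u = ereal \<alpha>"
    using u nm[of u] by (cases "h u") (auto simp: prox_obj_def)
  obtain \<beta> where \<beta>: "h w = ereal \<beta>"
    using w nm[of w] by (cases "h w") (auto simp: prox_obj_def)
  have "m \<le> (\<alpha> + (norm (y - u))\<^sup>2 / (2*l) + \<beta> + (norm (y - w))\<^sup>2 / (2*l)) / 2
      - (norm (u - w))\<^sup>2 / (8*l)"
    using order_trans[OF low[of "midpoint u w"] prox_obj_midpoint[OF conv \<alpha> \<beta> l, of y]] by simp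
  moreover have "\<alpha> + (norm (y - u))\<^sup>2 / (2*l) \<le> m + d" using u \<alpha> by (simp add: prox_obj_def)
  moreover have "\<beta> + (norm (y - w))\<^sup>2 / (2*l) \<le> m + e" using w \<beta> by (simp add: prox_obj_def)
  ultimately have "(norm (u - w))\<^sup>2 / (8*l) \<le> (d + e) / 2" by argo
  then show ?thesis using l by (simp add: field_simps)
qed

lemma prox_obj_bounded_below:
  fixes h :: "'a::real_normed_vector \<Rightarrow> ereal"
  assumes "h \<in> Gamma0" and l: "l > 0"
  obtains L where "\<And>u. ereal L \<le> prox_obj h l y u"
proof -
  obtain A B where AB: "B \<ge> 0" "\<And>u. ereal (A - B * norm (u - y)) \<le> h u"
    using Gamma0_cone_minorant[OF assms(1)] by blast
  have "ereal (A - B\<^sup>2 * l / 2) \<le> prox_obj h l y u" for u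
  proof -
    define s where "s = norm (u - y)"
    have "(s - B * l)\<^sup>2 / (2 * l) = s\<^sup>2 / (2 * l) - B * s + B\<^sup>2 * l / 2"
      using l by (simp add: field_simps power2_eq_square)
    moreover have "0 \<le> (s - B * l)\<^sup>2 / (2 * l)" using l by simp
    ultimately have "ereal (A - B\<^sup>2 * l / 2) \<le> ereal (A - B * s) + ereal (s\<^sup>2 / (2 * l))"
      by simp
    also have "\<dots> \<le> h u + ereal (s\<^sup>2 / (2 * l))"
      using AB(2)[of u] unfolding s_def by (rule add_right_mono)
    also have "\<dots> = prox_obj h l y u" by (simp add: prox_obj_def s_def norm_minus_commute)
    finally show ?thesis .
  qed
  then show thesis by (rule that)
qed

lemma Cauchy_if_sq_dist_le_harmonic:
  fixes u :: "nat \<Rightarrow> 'a::real_normed_vector"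
  assumes bound: "\<And>n j. (norm (u n - u j))\<^sup>2 \<le> C * (1 / Suc n + 1 / Suc j)"
  shows "Cauchy u"
proof (rule CauchyI)
  fix e :: real assume e: "e > 0"
  have C: "C \<ge> 0" using bound[of 0 0] by simp
  obtain N :: nat where N: "2 * C / e\<^sup>2 < N" using reals_Archimedean2 by blast
  have "norm (u n - u j) < e" if "N \<le> n" "N \<le> j" for n j
  proof -
    have "1 / real (Suc n) \<le> 1 / Suc N" "1 / real (Suc j) \<le> 1 / Suc N"
      using that by (simp_all add: frac_le)
    then have "C * (1 / Suc n + 1 / Suc j) \<le> C * (2 / Suc N)"
      using C by (intro mult_left_mono) auto
    then have "(norm (u n - u j))\<^sup>2 \<le> C * (2 / Suc N)"
      using bound[of n j] by linarith
    also have "\<dots> < e\<^sup>2"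
    proof -
      have "2 * C / e\<^sup>2 < Suc N" using N by simp
      then show ?thesis using e by (simp add: field_simps)
    qed
    finally show ?thesis using e by (simp add: power_less_imp_less_base)
  qed
  then show "\<exists>M. \<forall>m\<ge>M. \<forall>n\<ge>M. norm (u m - u n) < e" by blast
qed

lemma prox_obj_minimizing_sequence:
  fixes h :: "'a::real_normed_vector \<Rightarrow> ereal"
  assumes G: "h \<in> Gamma0" and l: "l > 0"
  obtains m u where "\<And>z. ereal m \<le> prox_obj h l y z"
    and "\<And>n. prox_obj h l y (u n) < ereal (m + 1 / Suc n)"
proof -
  let ?k = "prox_obj h l y"
  obtain L where L: "\<And>u. ereal L \<le> ?k u" using prox_obj_bounded_below[OF G l] by blast
  obtain x1 a where x1: "h x1 = ereal a" using Gamma0D(4)[OF G] by blast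
  have "ereal L \<le> (INF u. ?k u)" "(INF u. ?k u) \<le> ?k x1"
    by (auto intro: INF_greatest L INF_lower)
  then obtain m where m: "(INF u. ?k u) = ereal m"
    using x1 by (cases "INF u. ?k u") (auto simp: prox_obj_def)
  have low: "ereal m \<le> ?k z" for z using INF_lower[of z UNIV ?k] m by simp
  have "\<exists>u. ?k u < ereal (m + 1 / Suc n)" for n
  proof -
    have "(INF u. ?k u) < ereal (m + 1 / Suc n)" using m by simp
    then show ?thesis by (simp add: INF_less_iff)
  qed
  then obtain u where "\<And>n. ?k (u n) < ereal (m + 1 / Suc n)" by metis
  with low show thesis by (rule that)
qed

lemma proximal_point_exists:
  fixes h :: "'a::{real_inner,complete_space} \<Rightarrow> ereal"
  assumes G: "h \<in> Gamma0" and l: "l > 0"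
  obtains v where "proximal_point h l y v"
proof -
  let ?k = "prox_obj h l y"
  obtain m u where low: "\<And>z. ereal m \<le> ?k z" and u: "\<And>n. ?k (u n) < ereal (m + 1 / Suc n)"
    using prox_obj_minimizing_sequence[OF G l, where y = y] by blast
  have "(norm (u n - u j))\<^sup>2 \<le> 4 * l * (1 / Suc n + 1 / Suc j)" for n j
    using Gamma0D(1,3)[OF G] l low less_imp_le[OF u[of n]] less_imp_le[OF u[of j]]
    by (rule prox_obj_near_minimizers_close)
  then have "Cauchy u" by (rule Cauchy_if_sq_dist_le_harmonic)
  then obtain v where v: "u \<longlonglongrightarrow> v" using Cauchy_convergent_iff convergent_def by blast
  have "h v \<le> ereal (m - (norm (y - v))\<^sup>2 / (2*l))"
  proof (rule lsc_fun_LIMSEQ_le[OF Gamma0D(2)[OF G] v])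
    show "h (u n) \<le> ereal (m + inverse (Suc n) - (norm (y - u n))\<^sup>2 / (2*l))" for n
      using u[of n] Gamma0D(3)[OF G, of "u n"]
      by (cases "h (u n)") (auto simp: prox_obj_def inverse_eq_divide)
    have "(\<lambda>n. m + inverse (Suc n) - (norm (y - u n))\<^sup>2 / (2*l))
        \<longlonglongrightarrow> m + 0 - (norm (y - v))\<^sup>2 / (2*l)"
      using l by (intro tendsto_intros LIMSEQ_inverse_real_of_nat v) simp
    then show "(\<lambda>n. m + inverse (Suc n) - (norm (y - u n))\<^sup>2 / (2*l))
        \<longlonglongrightarrow> m - (norm (y - v))\<^sup>2 / (2*l)" by simp
  qed
  then have "?k v \<le> ereal (m - (norm (y - v))\<^sup>2 / (2*l)) + ereal ((norm (y - v))\<^sup>2 / (2*l))"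
    unfolding prox_obj_def by (rule add_right_mono)
  then have kv: "?k v \<le> ereal m" by simp
  have "proximal_point h l y v"
    unfolding proximal_point_def
  proof
    show "?k v \<le> ?k z" for z using kv low[of z] by (rule order_trans)
  qed
  then show thesis by (rule that)
qed

lemma proximal_point_finite:
  assumes "h \<in> Gamma0" "proximal_point h l y v"
  shows "h v \<noteq> \<infinity>"
proof
  assume "h v = \<infinity>"
  obtain x1 a where "h x1 = ereal a" using Gamma0D(4)[OF assms(1)] by blast
  then show False
    using assms(2) \<open>h v = \<infinity>\<close> by (auto simp: proximal_point_def prox_obj_def dest: spec[of _ x1])
qed

lemma proximal_point_unique:
  fixes h :: "'a::real_inner \<Rightarrow> ereal"
  assumes G: "h \<in> Gamma0" and l: "l > 0"
    and v: "proximal_point h l y v" and w: "proximal_point h l y w"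
  shows "v = w"
proof -
  obtain m where m: "prox_obj h l y v = ereal m"
    using proximal_point_finite[OF G v] Gamma0D(3)[OF G, of v]
    by (cases "h v") (auto simp: prox_obj_def)
  have low: "ereal m \<le> prox_obj h l y z" for z
    using v unfolding proximal_point_def m[symmetric] by blast
  have "prox_obj h l y v \<le> ereal (m + 0)" using m by simp
  moreover have "prox_obj h l y w \<le> ereal (m + 0)"
    using w m unfolding proximal_point_def by (metis add.right_neutral)
  ultimately have "(norm (v - w))\<^sup>2 \<le> 4 * l * (0 + 0)"
    by (rule prox_obj_near_minimizers_close[OF Gamma0D(1,3)[OF G] l low])
  then show ?thesis by simp
qed

lemma proximal_point_subgradient:
  fixes h :: "'a::real_inner \<Rightarrow> ereal"
  assumes conv: "convex_fun h" and nm: "\<And>x. h x \<noteq> -\<infinity>" and l: "l > 0"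
    and v: "proximal_point h l y v" and hv: "h v = ereal a"
  shows "h v + ereal (inner (y - v) (u - v) / l) \<le> h u"
proof (cases "h u")
  case (real b)
  define g where "g = inner (y - v) (u - v) / l"
  define D where "D = (norm (u - v))\<^sup>2"
  have step: "a + g \<le> b + t * D / (2*l)" if t: "0 < t" "t < 1" for t
  proof -
    define ut where "ut = (1 - t) *\<^sub>R v + t *\<^sub>R u"
    have "(norm (y - ut))\<^sup>2 / (2*l) = (norm (y - v))\<^sup>2 / (2*l) - t * g + t * (t * D / (2*l))"
      unfolding ut_def g_def D_def power2_norm_eq_inner using l
      by (simp add: inner_diff_left inner_diff_right inner_add_left inner_add_right inner_commute
          field_simps power2_eq_square)
    moreover have "a + (norm (y - v))\<^sup>2 / (2*l) \<le> (1 - t) * a + t * b + (norm (y - ut))\<^sup>2 / (2*l)"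
    proof -
      have "ereal (a + (norm (y - v))\<^sup>2 / (2*l)) \<le> prox_obj h l y ut"
        using v[unfolded proximal_point_def, rule_format, of ut] by (simp add: prox_obj_def hv)
      also have "\<dots> \<le> ereal ((1 - t) * a + t * b) + ereal ((norm (y - ut))\<^sup>2 / (2*l))"
        unfolding prox_obj_def ut_def by (rule add_right_mono[OF convex_funD_ereal[OF conv hv real t]])
      finally show ?thesis by simp
    qed
    ultimately have "t * (a + g) \<le> t * (b + t * D / (2*l))"
      by (simp add: algebra_simps)
    then show ?thesis using t by simp
  qed
  have "eventually (\<lambda>t. a + g \<le> b + t * D / (2*l)) (at_right 0)"
    using eventually_at_right_real[OF zero_less_one] by eventually_elim (auto intro: step)
  moreover have "((\<lambda>t. b + t * D / (2*l)) \<longlongrightarrow> b + 0 * D / (2*l)) (at_right 0)"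
    using l by (intro tendsto_intros) simp
  ultimately have "a + g \<le> b + 0 * D / (2*l)"
    by (intro tendsto_lowerbound[OF _ _ trivial_limit_at_right_real]) auto
  then show ?thesis using hv real by (simp add: g_def)
qed (use nm in auto)

lemma proximal_point_prox:
  fixes f :: "'a::{real_inner,complete_space} \<Rightarrow> ereal"
  assumes G: "f \<in> Gamma0"
  shows "proximal_point f 1 x (prox f x)"
proof -
  obtain v where v: "proximal_point f 1 x v" using proximal_point_exists[OF G, of 1] by auto
  have "prox f x = v" unfolding prox_def
  proof (rule the_equality)
    show "\<forall>z. f v + ereal ((norm (x - v))\<^sup>2 / 2) \<le> f z + ereal ((norm (x - z))\<^sup>2 / 2)"
      using v by (simp add: proximal_point_def prox_obj_def)
    show "w = v" if "\<forall>z. f w + ereal ((norm (x - w))\<^sup>2 / 2) \<le> f z + ereal ((norm (x - z))\<^sup>2 / 2)" for w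
      using proximal_point_unique[OF G _ _ v] that by (simp add: proximal_point_def prox_obj_def)
  qed
  with v show ?thesis by simp
qed

lemma prox_real_valued:
  fixes f :: "'a::{real_inner,complete_space} \<Rightarrow> ereal"
  assumes "f \<in> Gamma0"
  obtains r where "f (prox f x) = ereal r"
  using Gamma0_real_valued[OF assms proximal_point_finite[OF assms proximal_point_prox[OF assms]]] .

lemma prox_subgradient:
  fixes f :: "'a::{real_inner,complete_space} \<Rightarrow> ereal"
  assumes G: "f \<in> Gamma0"
  shows "f (prox f x) + ereal (inner (x - prox f x) (u - prox f x)) \<le> f u"
proof -
  obtain r where "f (prox f x) = ereal r" using prox_real_valued[OF G] .
  from proximal_point_subgradient[OF Gamma0D(1,3)[OF G] _ proximal_point_prox[OF G] this]
  show ?thesis by simp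
qed

lemma prox_minimal_real:
  fixes f :: "'a::{real_inner,complete_space} \<Rightarrow> ereal"
  assumes G: "f \<in> Gamma0" and fz: "f z = ereal c" and fp: "f (prox f x) = ereal r"
  shows "r + (norm (x - prox f x))\<^sup>2 / 2 \<le> c + (norm (x - z))\<^sup>2 / 2"
  using proximal_point_prox[OF G, of x] fz fp
  by (auto simp: proximal_point_def prox_obj_def dest: spec[of _ z])

section \<open>Comparing convex functions through the norms of their gradients\<close>

lemma norm_diff_scaleR_sq:
  fixes p w :: "'a::real_inner"
  shows "(norm (p - t *\<^sub>R w))\<^sup>2 = (norm p)\<^sup>2 - 2 * t * inner p w + t\<^sup>2 * (norm w)\<^sup>2"
  unfolding power2_norm_eq_inner
  by (simp add: inner_diff_left inner_diff_right inner_commute[of w p] power2_eq_square algebra_simps)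

text \<open>Cocoercivity of \<open>H\<close> follows from the other two assumptions (Baillon-Haddad), but it is
  immediate for the gradient \<open>prox f - x0\<close> of interest, so it is assumed directly.\<close>

locale smooth_convex_bounded_below =
  fixes \<Psi> :: "'a::real_inner \<Rightarrow> real" and H :: "'a \<Rightarrow> 'a" and m :: real
  assumes subgradient: "\<Psi> x + inner (H x) (z - x) \<le> \<Psi> z"
    and smooth: "\<Psi> z \<le> \<Psi> x + inner (H x) (z - x) + (norm (z - x))\<^sup>2 / 2"
    and cocoercive: "(norm (H a - H b))\<^sup>2 \<le> inner (H a - H b) (a - b)"
    and lower_bound: "m \<le> \<Psi> x"
begin

primrec descent :: "real \<Rightarrow> 'a \<Rightarrow> nat \<Rightarrow> 'a" where
  "descent t x 0 = x"
| "descent t x (Suc n) = descent t x n - t *\<^sub>R H (descent t x n)"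

lemma descent_step_decrease:
  "\<Psi> (x - t *\<^sub>R H x) \<le> \<Psi> x - (t - t\<^sup>2 / 2) * (norm (H x))\<^sup>2"
  using smooth[of "x - t *\<^sub>R H x" x]
  by (simp add: power2_norm_eq_inner power_mult_distrib algebra_simps)

lemma descent_step_le:
  assumes "0 \<le> t" "t \<le> 2"
  shows "\<Psi> (x - t *\<^sub>R H x) \<le> \<Psi> x"
proof -
  have "0 \<le> t * (1 - t / 2) * (norm (H x))\<^sup>2" using assms by simp
  then show ?thesis using descent_step_decrease[of x t] by (simp add: algebra_simps power2_eq_square)
qed

lemma descent_step_grad_le:
  assumes t: "0 \<le> t" "t \<le> 1"
  shows "norm (H (x - t *\<^sub>R H x)) \<le> norm (H x)"
proof (rule ccontr)
  define p where "p = H (x - t *\<^sub>R H x)"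
  define q where "q = H x"
  assume "\<not> ?thesis"
  then have pq: "norm q < norm p" by (simp add: p_def q_def)
  have "(norm (p - q))\<^sup>2 \<le> inner (p - q) (- (t *\<^sub>R q))"
    using cocoercive[of "x - t *\<^sub>R H x" x] by (simp add: p_def q_def)
  then have "inner p p + (1 - t) * inner q q \<le> (2 - t) * inner p q"
    unfolding power2_norm_eq_inner by (simp add: inner_diff_left inner_diff_right inner_commute algebra_simps)
  also have "\<dots> \<le> (2 - t) * (norm p * norm q)"
    using t norm_cauchy_schwarz[of p q] by (intro mult_left_mono) auto
  finally have "(norm p - norm q) * (norm p - (1 - t) * norm q) \<le> 0"
    by (simp add: power2_norm_eq_inner[symmetric] power2_eq_square algebra_simps)
  moreover have "0 < (norm p - norm q) * (norm p - (1 - t) * norm q)"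
    using pq t by (intro mult_pos_pos) (auto simp: algebra_simps intro: add_nonneg_nonneg order.strict_trans2)
  ultimately show False by simp
qed

lemma descent_step_dist:
  assumes t: "0 \<le> t" "t \<le> 1"
  shows "(norm (x - t *\<^sub>R H x - w))\<^sup>2 \<le> (norm (x - w))\<^sup>2 + 2 * t * (\<Psi> w - \<Psi> (x - t *\<^sub>R H x))"
proof -
  have "x - t *\<^sub>R H x - w = (x - w) - t *\<^sub>R H x" by simp
  then have "(norm (x - t *\<^sub>R H x - w))\<^sup>2
      = (norm (x - w))\<^sup>2 - 2 * t * inner (x - w) (H x) + t\<^sup>2 * (norm (H x))\<^sup>2"
    by (simp only: norm_diff_scaleR_sq)
  moreover have "t * (\<Psi> x - \<Psi> w) \<le> t * inner (x - w) (H x)"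
    using subgradient[of x w] t by (intro mult_left_mono) (auto simp: inner_commute inner_diff_right)
  moreover have "t\<^sup>2 * (norm (H x))\<^sup>2 \<le> 2 * t * (t - t\<^sup>2 / 2) * (norm (H x))\<^sup>2"
  proof (rule mult_right_mono)
    have "0 \<le> t\<^sup>2 * (1 - t)" using t by simp
    then show "t\<^sup>2 \<le> 2 * t * (t - t\<^sup>2 / 2)" by (simp add: power2_eq_square algebra_simps)
  qed simp
  moreover have "t * ((t - t\<^sup>2 / 2) * (norm (H x))\<^sup>2) \<le> t * (\<Psi> x - \<Psi> (x - t *\<^sub>R H x))"
    using descent_step_decrease[of x t] t by (intro mult_left_mono) auto
  ultimately show ?thesis by (simp add: algebra_simps)
qed

lemma descent_grad_antimono:
  assumes "0 \<le> t" "t \<le> 1"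
  shows "norm (H (descent t x (n + j))) \<le> norm (H (descent t x n))"
  by (induction j) (auto intro: order_trans[OF descent_step_grad_le[OF assms]])

lemma descent_dist:
  assumes t: "0 \<le> t" "t \<le> 1"
  shows "(norm (descent t x n - w))\<^sup>2 \<le> (norm (x - w))\<^sup>2 + 2 * t * n * (\<Psi> w - m)"
proof (induction n)
  case (Suc n)
  have "t * (\<Psi> w - \<Psi> (descent t x (Suc n))) \<le> t * (\<Psi> w - m)"
    using lower_bound t(1) by (intro mult_left_mono) auto
  then show ?case
    using Suc descent_step_dist[OF t, of "descent t x n" w] by (simp add: algebra_simps)
qed simp

lemma descent_grad_sum:
  assumes t: "0 \<le> t" "t \<le> 1"
  shows "t / 2 * j * (norm (H (descent t x (n + j))))\<^sup>2 \<le> \<Psi> (descent t x n) - \<Psi> (descent t x (n + j))"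
proof (induction j)
  case (Suc j)
  let ?z = "descent t x (n + j)"
  let ?z' = "descent t x (n + Suc j)"
  have "(norm (H ?z'))\<^sup>2 \<le> (norm (H ?z))\<^sup>2"
    using descent_grad_antimono[OF t, of x "n + j" 1] by (simp add: power_mono)
  then have "t / 2 * j * (norm (H ?z'))\<^sup>2 \<le> t / 2 * j * (norm (H ?z))\<^sup>2"
    and "t / 2 * (norm (H ?z'))\<^sup>2 \<le> t / 2 * (norm (H ?z))\<^sup>2"
    using t by (auto intro: mult_left_mono)
  moreover have "t / 2 * (norm (H ?z))\<^sup>2 \<le> (t - t\<^sup>2 / 2) * (norm (H ?z))\<^sup>2"
    using t by (intro mult_right_mono) (auto simp: power2_eq_square mult_left_le)
  moreover have "\<Psi> ?z' \<le> \<Psi> ?z - (t - t\<^sup>2 / 2) * (norm (H ?z))\<^sup>2"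
    using descent_step_decrease[of ?z t] by simp
  moreover have "t / 2 * real (Suc j) * (norm (H ?z'))\<^sup>2
      = t / 2 * j * (norm (H ?z'))\<^sup>2 + t / 2 * (norm (H ?z'))\<^sup>2"
    by (simp add: algebra_simps)
  ultimately show ?case using Suc.IH by linarith
qed simp


text \<open>Between steps \<open>n\<close> and \<open>2n\<close> the value of \<open>\<Psi>\<close> drops by at least \<open>n t/2 \<parallel>H z\<^sub>2\<^sub>n\<parallel>\<^sup>2\<close>,
  since gradient norms do not increase along the iteration, whereas \<open>\<parallel>z\<^sub>2\<^sub>n - w\<parallel>\<^sup>2\<close> grows at most
  linearly in \<open>n\<close>.\<close>

lemma descent_grad_dist_sq_le:
  assumes t: "0 < t" "t \<le> 1" and n: "n \<ge> 1"
  shows "(norm (H (descent t x (n + n))) * norm (descent t x (n + n) - w))\<^sup>2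
    \<le> 2 / t * ((norm (x - w))\<^sup>2 + 4 * t * (\<Psi> w - m))
        * (\<Psi> (descent t x n) - \<Psi> (descent t x (n + n)))"
    (is "_ \<le> ?C * _")
proof -
  let ?z = "descent t x"
  define hh where "hh = (norm (H (?z (n + n))))\<^sup>2"
  have K: "0 \<le> \<Psi> w - m" using lower_bound by simp
  have "hh * (norm (?z (n + n) - w))\<^sup>2 \<le> hh * ((norm (x - w))\<^sup>2 + 4 * t * n * (\<Psi> w - m))"
    using descent_dist[of t x "n + n" w] t by (intro mult_left_mono) (auto simp: hh_def algebra_simps)
  also have "\<dots> \<le> n * hh * ((norm (x - w))\<^sup>2 + 4 * t * (\<Psi> w - m))"
  proof -
    have "0 \<le> (real n - 1) * (hh * (norm (x - w))\<^sup>2)"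
      using n by (intro mult_nonneg_nonneg) (auto simp: hh_def)
    then show ?thesis by (simp add: algebra_simps)
  qed
  also have "\<dots> = ?C * (t / 2 * n * hh)" using t by simp
  also have "\<dots> \<le> ?C * (\<Psi> (?z n) - \<Psi> (?z (n + n)))"
    using descent_grad_sum[where x = x and n = n and j = n] t K
    by (intro mult_left_mono) (auto simp: hh_def)
  finally show ?thesis by (simp add: hh_def power_mult_distrib)
qed

lemma descent_value_convergent:
  assumes t: "0 \<le> t" "t \<le> 1"
  obtains L where "(\<lambda>n. \<Psi> (descent t x n)) \<longlonglongrightarrow> L"
proof -
  have "decseq (\<lambda>n. \<Psi> (descent t x n))"
    using descent_step_le t by (intro decseq_SucI) simp
  then obtain L where "(\<lambda>n. \<Psi> (descent t x n)) \<longlonglongrightarrow> L"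
    using decseq_convergent[of _ m] lower_bound by blast
  then show thesis by (rule that)
qed

lemma descent_grad_dist_small:
  assumes t: "0 < t" "t \<le> 1" and e: "e > 0"
  obtains n where "norm (H (descent t x n)) * norm (descent t x n - w) < e"
proof -
  let ?z = "descent t x" and ?C = "2 / t * ((norm (x - w))\<^sup>2 + 4 * t * (\<Psi> w - m))"
  obtain L where L: "(\<lambda>n. \<Psi> (?z n)) \<longlonglongrightarrow> L" using descent_value_convergent[OF less_imp_le[OF t(1)] t(2)] .
  moreover have "strict_mono (\<lambda>n::nat. n + n)" by (rule strict_monoI) simp
  ultimately have "(\<lambda>n. \<Psi> (?z (n + n))) \<longlonglongrightarrow> L"
    using LIMSEQ_subseq_LIMSEQ[OF L] by (simp add: o_def)
  with L have "(\<lambda>n. ?C * (\<Psi> (?z n) - \<Psi> (?z (n + n)))) \<longlonglongrightarrow> ?C * (L - L)"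
    by (intro tendsto_intros)
  then have "eventually (\<lambda>n. ?C * (\<Psi> (?z n) - \<Psi> (?z (n + n))) < e\<^sup>2) sequentially"
    using e by (intro order_tendstoD) auto
  then obtain N where N: "\<And>n. n \<ge> N \<Longrightarrow> ?C * (\<Psi> (?z n) - \<Psi> (?z (n + n))) < e\<^sup>2"
    by (auto simp: eventually_sequentially)
  have "(norm (H (?z (Suc N + Suc N))) * norm (?z (Suc N + Suc N) - w))\<^sup>2 < e\<^sup>2"
    using descent_grad_dist_sq_le[OF t, of "Suc N" x w] N[of "Suc N"] by simp
  then show thesis using e by (intro that[of "Suc N + Suc N"]) (simp add: power_less_imp_less_base)
qed

lemma descent_decrease_compare:
  fixes \<Phi> :: "'a \<Rightarrow> real" and G :: "'a \<Rightarrow> 'a"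
  assumes \<Phi>: "\<And>x z. \<Phi> x + inner (G x) (z - x) \<le> \<Phi> z" and G: "\<And>x. norm (G x) \<le> norm (H x)"
    and t: "0 \<le> t" "t \<le> 2"
  shows "(1 - t / 2) * (\<Phi> x - \<Phi> (descent t x n)) \<le> \<Psi> x - \<Psi> (descent t x n)"
proof (induction n)
  case (Suc n)
  let ?z = "descent t x n" and ?z' = "descent t x (Suc n)"
  have "\<Phi> ?z - \<Phi> ?z' \<le> t * inner (G ?z) (H ?z)"
    using \<Phi>[of ?z ?z'] by simp
  also have "\<dots> \<le> t * (norm (H ?z))\<^sup>2"
    using t norm_cauchy_schwarz[of "G ?z" "H ?z"] mult_right_mono[OF G[of ?z], of "norm (H ?z)"]
    by (intro mult_left_mono) (auto simp: power2_eq_square)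
  finally have "(1 - t / 2) * (\<Phi> ?z - \<Phi> ?z') \<le> (1 - t / 2) * (t * (norm (H ?z))\<^sup>2)"
    using t by (intro mult_left_mono) auto
  also have "\<dots> \<le> \<Psi> ?z - \<Psi> ?z'"
    using descent_step_decrease[of ?z t] by (simp add: algebra_simps power2_eq_square)
  finally have "(1 - t / 2) * (\<Phi> ?z - \<Phi> ?z') \<le> \<Psi> ?z - \<Psi> ?z'" .
  moreover have "(1 - t / 2) * (\<Phi> x - \<Phi> ?z') = (1 - t / 2) * (\<Phi> x - \<Phi> ?z) + (1 - t / 2) * (\<Phi> ?z - \<Phi> ?z')"
    by (simp add: algebra_simps)
  ultimately show ?case using Suc.IH by linarith
qed simp


lemma descent_decrease_le:
  fixes \<Phi> :: "'a \<Rightarrow> real" and G :: "'a \<Rightarrow> 'a"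
  assumes \<Phi>: "\<And>x z. \<Phi> x + inner (G x) (z - x) \<le> \<Phi> z" and G: "\<And>x. norm (G x) \<le> norm (H x)"
    and t: "0 \<le> t" "t \<le> 1"
  shows "\<Phi> x - \<Phi> (descent t x n) \<le> (1 + t) * (\<Psi> x - m)"
proof (cases "\<Phi> x - \<Phi> (descent t x n) \<le> 0")
  case True
  moreover have "0 \<le> (1 + t) * (\<Psi> x - m)"
    using t lower_bound[of x] by (intro mult_nonneg_nonneg) auto
  ultimately show ?thesis by linarith
next
  case False
  define \<delta> where "\<delta> = \<Phi> x - \<Phi> (descent t x n)"
  have "0 \<le> t * (1 - t) / 2 * \<delta>" using False t by (simp add: \<delta>_def)
  then have "\<delta> \<le> (1 + t) * ((1 - t / 2) * \<delta>)" by (simp add: algebra_simps)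
  also have "\<dots> \<le> (1 + t) * (\<Psi> x - m)"
    using descent_decrease_compare[OF \<Phi> G, of t x n] t lower_bound[of "descent t x n"]
    by (intro mult_left_mono) (auto simp: \<delta>_def)
  finally show ?thesis by (simp add: \<delta>_def)
qed

text \<open>Gradient descent on \<open>\<Psi>\<close> with a small step lowers \<open>\<Phi>\<close> by at most slightly more than it
  lowers \<open>\<Psi>\<close>, while bringing \<open>\<Phi>\<close> arbitrarily close to its infimum.\<close>

lemma gradient_comparison:
  fixes \<Phi> :: "'a \<Rightarrow> real" and G :: "'a \<Rightarrow> 'a" and m\<Phi> :: real
  assumes \<Phi>: "\<And>x z. \<Phi> x + inner (G x) (z - x) \<le> \<Phi> z" and G: "\<And>x. norm (G x) \<le> norm (H x)"
    and inf: "\<And>e. e > 0 \<Longrightarrow> \<exists>w. \<Phi> w \<le> m\<Phi> + e"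
  shows "\<Phi> x - m\<Phi> \<le> \<Psi> x - m"
proof (rule ccontr)
  assume neg: "\<not> ?thesis"
  define D where "D = \<Psi> x - m"
  define \<gamma> where "\<gamma> = \<Phi> x - m\<Phi> - D"
  have \<gamma>: "\<gamma> > 0" and D: "D \<ge> 0"
    using neg lower_bound[of x] by (auto simp: \<gamma>_def D_def)
  define t where "t = min 1 (\<gamma> / (4 * (D + 1)))"
  have t: "0 < t" "t \<le> 1" using \<gamma> D by (auto simp: t_def)
  have "t * D \<le> \<gamma> / (4 * (D + 1)) * (D + 1)"
    using D t by (intro mult_mono) (auto simp: t_def)
  also have "\<dots> = \<gamma> / 4" using D by (simp add: field_simps)
  finally have tD: "t * D \<le> \<gamma> / 4" .
  have far: "m\<Phi> + 3 * \<gamma> / 4 \<le> \<Phi> (descent t x n)" for n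
  proof -
    have "\<Phi> x - \<Phi> (descent t x n) \<le> (1 + t) * D"
      using descent_decrease_le[OF \<Phi> G, of t x n] t by (simp add: D_def)
    then have "\<Phi> x - \<Phi> (descent t x n) \<le> D + t * D" by (simp add: algebra_simps)
    then show ?thesis using tD unfolding \<gamma>_def by argo
  qed
  obtain w where w: "\<Phi> w \<le> m\<Phi> + \<gamma> / 4" using inf[of "\<gamma> / 4"] \<gamma> by auto
  obtain n where n: "norm (H (descent t x n)) * norm (descent t x n - w) < \<gamma> / 4"
    using descent_grad_dist_small[OF t, where e = "\<gamma> / 4" and x = x and w = w] \<gamma> by auto
  let ?z = "descent t x n"
  have "\<Phi> ?z \<le> \<Phi> w + inner (G ?z) (?z - w)"
    using \<Phi>[of ?z w] by (simp add: inner_diff_right)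
  also have "inner (G ?z) (?z - w) \<le> norm (H ?z) * norm (?z - w)"
    using norm_cauchy_schwarz[of "G ?z" "?z - w"] mult_right_mono[OF G[of ?z], of "norm (?z - w)"]
    by simp
  finally have "\<Phi> ?z < m\<Phi> + \<gamma> / 2" using w n by simp
  with far[of n] \<gamma> show False by simp
qed

end

section \<open>The proximal potential\<close>

text \<open>The conjugate of \<open>f + \<parallel>\<cdot>\<parallel>\<^sup>2/2\<close>, evaluated through its maximiser \<open>prox f x\<close>, minus
  \<open>\<langle>\<cdot>, x0\<rangle>\<close>; \<open>real_of_ereal\<close> is harmless because \<open>f (prox f x)\<close> is finite for
  \<open>f \<in> Gamma0\<close>.\<close>

definition prox_potential :: "('a::real_inner \<Rightarrow> ereal) \<Rightarrow> 'a \<Rightarrow> 'a \<Rightarrow> real" where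
  "prox_potential f x0 x =
     inner x (prox f x - x0) - real_of_ereal (f (prox f x)) - (norm (prox f x))\<^sup>2 / 2"

lemma prox_potential_subgradient:
  fixes f :: "'a::{real_inner,complete_space} \<Rightarrow> ereal"
  assumes G: "f \<in> Gamma0"
  shows "prox_potential f x0 x + inner (prox f x - x0) (z - x) \<le> prox_potential f x0 z"
proof -
  obtain r where r: "f (prox f x) = ereal r" using prox_real_valued[OF G] .
  obtain s where s: "f (prox f z) = ereal s" using prox_real_valued[OF G] .
  have "s + (norm (z - prox f z))\<^sup>2 / 2 \<le> r + (norm (z - prox f x))\<^sup>2 / 2"
    by (rule prox_minimal_real[OF G r s])
  then show ?thesis unfolding prox_potential_def r s power2_norm_eq_inner
    by (simp add: inner_diff_left inner_diff_right inner_add_left inner_add_right inner_commute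
        field_simps)
qed

lemma prox_potential_smooth:
  fixes f :: "'a::{real_inner,complete_space} \<Rightarrow> ereal"
  assumes G: "f \<in> Gamma0"
  shows "prox_potential f x0 z
    \<le> prox_potential f x0 x + inner (prox f x - x0) (z - x) + (norm (z - x))\<^sup>2 / 2"
proof -
  obtain r where r: "f (prox f x) = ereal r" using prox_real_valued[OF G] .
  obtain s where s: "f (prox f z) = ereal s" using prox_real_valued[OF G] .
  have "r + inner (x - prox f x) (prox f z - prox f x) \<le> s"
    using prox_subgradient[OF G, of x "prox f z"] r s by simp
  moreover have "0 \<le> (norm ((z - x) - (prox f z - prox f x)))\<^sup>2" by simp
  ultimately show ?thesis unfolding prox_potential_def r s power2_norm_eq_inner
    by (simp add: inner_diff_left inner_diff_right inner_add_left inner_add_right inner_commute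
        field_simps)
qed

lemma prox_firmly_nonexpansive:
  fixes f :: "'a::{real_inner,complete_space} \<Rightarrow> ereal"
  assumes G: "f \<in> Gamma0"
  shows "(norm (prox f a - prox f b))\<^sup>2 \<le> inner (prox f a - prox f b) (a - b)"
proof -
  obtain r where r: "f (prox f a) = ereal r" using prox_real_valued[OF G] .
  obtain s where s: "f (prox f b) = ereal s" using prox_real_valued[OF G] .
  have "r + inner (a - prox f a) (prox f b - prox f a) \<le> s"
    using prox_subgradient[OF G, of a "prox f b"] r s by simp
  moreover have "s + inner (b - prox f b) (prox f a - prox f b) \<le> r"
    using prox_subgradient[OF G, of b "prox f a"] r s by simp
  ultimately show ?thesis unfolding power2_norm_eq_inner
    by (simp add: inner_diff_left inner_diff_right inner_commute field_simps)
qed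

lemma prox_potential_fenchel_young:
  fixes f :: "'a::{real_inner,complete_space} \<Rightarrow> ereal"
  assumes G: "f \<in> Gamma0" and fy: "f y = ereal c"
  shows "inner x (y - x0) - c - (norm y)\<^sup>2 / 2 \<le> prox_potential f x0 x"
proof -
  obtain r where r: "f (prox f x) = ereal r" using prox_real_valued[OF G] .
  have "r + (norm (x - prox f x))\<^sup>2 / 2 \<le> c + (norm (x - y))\<^sup>2 / 2"
    by (rule prox_minimal_real[OF G fy r])
  then show ?thesis unfolding prox_potential_def r power2_norm_eq_inner
    by (simp add: inner_diff_left inner_diff_right inner_add_left inner_add_right inner_commute
        field_simps)
qed

lemma sq_div_ge_affine:
  fixes d \<rho> l B c :: real
  assumes "\<rho> \<le> d" "0 < \<rho>" "0 < l" "2 * l * (\<rho> * B + c) \<le> \<rho>\<^sup>2" "0 \<le> B" "0 \<le> c"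
  shows "d * B + c \<le> d\<^sup>2 / (2 * l)"
proof -
  define r where "r = d / \<rho>"
  have r: "1 \<le> r" using assms(1,2) by (simp add: r_def)
  have K: "0 \<le> \<rho> * B + c" using assms(2,5,6) by simp
  have "(\<rho> * B + c) * (2 * l) \<le> \<rho>\<^sup>2" using assms(4) by (simp add: mult.commute)
  then have K\<rho>: "\<rho> * B + c \<le> \<rho>\<^sup>2 / (2 * l)" using assms(3) by (simp add: pos_le_divide_eq)
  have "d * B + c \<le> d * B + r * c" using mult_right_mono[OF r assms(6)] by simp
  also have "\<dots> = r * (\<rho> * B + c)" using assms(2) by (simp add: r_def algebra_simps)
  also have "\<dots> \<le> r\<^sup>2 * (\<rho> * B + c)"
    using mult_left_mono[OF r, of r] r K by (intro mult_right_mono) (auto simp: power2_eq_square)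
  also have "\<dots> \<le> r\<^sup>2 * (\<rho>\<^sup>2 / (2 * l))" using K\<rho> by (intro mult_left_mono) auto
  also have "\<dots> = d\<^sup>2 / (2 * l)" using assms(2) by (simp add: r_def power_divide)
  finally show ?thesis .
qed

lemma prox_obj_small_parameter_lower:
  fixes h :: "'a::real_normed_vector \<Rightarrow> ereal"
  assumes G: "h \<in> Gamma0" and M: "ereal M < h y"
  obtains l where "0 < l" "l \<le> 1" "\<And>v. ereal M < prox_obj h l y v"
proof -
  obtain A B where AB: "B \<ge> 0" "\<And>u. ereal (A - B * norm (u - y)) \<le> h u"
    using Gamma0_cone_minorant[OF G] by blast
  obtain \<rho> where \<rho>: "\<rho> > 0" "\<And>u. dist u y < \<rho> \<Longrightarrow> ereal M < h u"
    using lsc_fun_ball_greater[OF Gamma0D(2)[OF G] M] by blast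
  define c where "c = \<bar>M - A\<bar> + 1"
  define l where "l = min 1 (\<rho>\<^sup>2 / (2 * (\<rho> * B + c)))"
  have K: "\<rho> * B + c > 0" using \<rho>(1) AB(1) by (simp add: c_def add_nonneg_pos)
  have l: "0 < l" "l \<le> 1" using K \<rho>(1) by (simp_all add: l_def)
  have "l \<le> \<rho>\<^sup>2 / (2 * (\<rho> * B + c))" by (simp add: l_def)
  then have l2: "2 * l * (\<rho> * B + c) \<le> \<rho>\<^sup>2" using K by (simp add: pos_le_divide_eq algebra_simps)
  have "ereal M < prox_obj h l y v" for v
  proof (cases "norm (v - y) < \<rho>")
    case True
    then have "ereal M < h v" using \<rho>(2) by (simp add: dist_norm)
    also have "\<dots> \<le> prox_obj h l y v"
      unfolding prox_obj_def using l(1) by (intro add_increasing2) auto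
    finally show ?thesis .
  next
    case False
    define d where "d = norm (v - y)"
    have "d * B + c \<le> d\<^sup>2 / (2 * l)"
      using False l l2 \<rho>(1) AB(1) by (intro sq_div_ge_affine) (auto simp: d_def c_def)
    then have "M < (A - B * d) + d\<^sup>2 / (2 * l)" by (simp add: c_def algebra_simps)
    then have "ereal M < ereal (A - B * d) + ereal (d\<^sup>2 / (2 * l))" by simp
    also have "\<dots> \<le> h v + ereal (d\<^sup>2 / (2 * l))"
      using AB(2)[of v] unfolding d_def by (rule add_right_mono)
    also have "\<dots> = prox_obj h l y v" by (simp add: prox_obj_def d_def norm_minus_commute)
    finally show ?thesis .
  qed
  with l(1,2) show thesis by (rule that)
qed

text \<open>If \<open>v\<close> is the proximal point of \<open>y\<close> with parameter \<open>l\<close>, then \<open>(y - v) / l\<close> is a subgradient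
  of \<open>h\<close> at \<open>v\<close>, and \<open>w\<close> below is the point at which the conjugate sees it.\<close>

lemma prox_potential_conj_ge:
  fixes h :: "'a::{real_inner,complete_space} \<Rightarrow> ereal"
  assumes G: "h \<in> Gamma0" and l: "0 < l" "l \<le> 1"
    and v: "proximal_point h l y v" and hv: "h v = ereal \<alpha>"
  defines "w \<equiv> v + (1 / l) *\<^sub>R (y - v)"
  shows "\<alpha> + (norm (y - v))\<^sup>2 / (2 * l) + (norm y)\<^sup>2 / 2 \<le> inner w (y - x0) - prox_potential h x0 w"
proof -
  define s where "s = (1 / l) *\<^sub>R (y - v)"
  define p where "p = prox h w"
  define D where "D = (norm (y - v))\<^sup>2"
  obtain \<beta> where \<beta>: "h p = ereal \<beta>" unfolding p_def using prox_real_valued[OF G] .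
  have pot: "prox_potential h x0 w = inner w (p - x0) - \<beta> - (norm p)\<^sup>2 / 2"
    by (simp add: prox_potential_def flip: p_def add: \<beta>)
  have sub: "\<alpha> + inner s (p - v) \<le> \<beta>"
    using proximal_point_subgradient[OF Gamma0D(1,3)[OF G] l(1) v hv, of p] hv \<beta>
    by (simp add: s_def)
  have "D / (2 * l) + D / 2 \<le> D / l"
    using l by (simp add: D_def field_simps mult_left_le_one_le)
  moreover have "inner s (y - v) = D / l" by (simp add: s_def D_def power2_norm_eq_inner)
  ultimately have "\<alpha> + D / (2 * l) + (norm y)\<^sup>2 / 2 \<le> \<alpha> + inner s (y - v) + ((norm y)\<^sup>2 - D) / 2"
    by argo
  also have "\<dots> = \<alpha> + inner s (y - v) + inner v y - (norm v)\<^sup>2 / 2"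
    unfolding D_def power2_norm_eq_inner
    by (simp add: inner_diff_left inner_diff_right inner_commute field_simps)
  also have "\<dots> \<le> \<beta> + inner s (y - p) + inner v y - (norm v)\<^sup>2 / 2"
    using sub by (simp add: inner_diff_right)
  also have "\<dots> \<le> \<beta> + inner s (y - p) + inner v y - (norm v)\<^sup>2 / 2 + (norm (p - v))\<^sup>2 / 2"
    by simp
  also have "\<dots> = inner w (y - x0) - (inner w (p - x0) - \<beta> - (norm p)\<^sup>2 / 2)"
    unfolding w_def s_def[symmetric] power2_norm_eq_inner
    by (simp add: inner_diff_left inner_diff_right inner_add_left inner_add_right inner_commute
        field_simps)
  finally show ?thesis by (simp add: D_def pot)
qed

lemma prox_potential_biconjugate:
  fixes h :: "'a::{real_inner,complete_space} \<Rightarrow> ereal"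
  assumes G: "h \<in> Gamma0" and M: "ereal M < h y + ereal ((norm y)\<^sup>2 / 2)"
  obtains w where "M < inner w (y - x0) - prox_potential h x0 w"
proof -
  have "ereal (M - (norm y)\<^sup>2 / 2) < h y"
    using M Gamma0D(3)[OF G, of y] by (cases "h y") auto
  then obtain l where l: "0 < l" "l \<le> 1" "\<And>v. ereal (M - (norm y)\<^sup>2 / 2) < prox_obj h l y v"
    using prox_obj_small_parameter_lower[OF G] by blast
  obtain v where v: "proximal_point h l y v" using proximal_point_exists[OF G l(1)] .
  obtain \<alpha> where \<alpha>: "h v = ereal \<alpha>" using Gamma0_real_valued[OF G proximal_point_finite[OF G v]] .
  have "M - (norm y)\<^sup>2 / 2 < \<alpha> + (norm (y - v))\<^sup>2 / (2 * l)"
    using l(3)[of v] by (simp add: prox_obj_def \<alpha>)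
  with prox_potential_conj_ge[OF G l(1,2) v \<alpha>, of x0] show thesis
    by (intro that[of "v + (1 / l) *\<^sub>R (y - v)"]) linarith
qed

lemma prox_potential_smooth_convex:
  fixes g :: "'a::{real_inner,complete_space} \<Rightarrow> ereal"
  assumes G: "g \<in> Gamma0" and b: "g x0 = ereal b"
  shows "smooth_convex_bounded_below (prox_potential g x0) (\<lambda>x. prox g x - x0) (- b - (norm x0)\<^sup>2 / 2)"
proof
  show "prox_potential g x0 x + inner (prox g x - x0) (z - x) \<le> prox_potential g x0 z" for x z
    by (rule prox_potential_subgradient[OF G])
  show "prox_potential g x0 z
      \<le> prox_potential g x0 x + inner (prox g x - x0) (z - x) + (norm (z - x))\<^sup>2 / 2" for x z
    by (rule prox_potential_smooth[OF G])
  show "(norm ((prox g u - x0) - (prox g v - x0)))\<^sup>2 \<le> inner ((prox g u - x0) - (prox g v - x0)) (u - v)"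
    for u v using prox_firmly_nonexpansive[OF G, of u v] by simp
  show "- b - (norm x0)\<^sup>2 / 2 \<le> prox_potential g x0 x" for x
    using prox_potential_fenchel_young[OF G b, of x x0] by simp
qed

lemma prox_potential_near_inf:
  fixes f :: "'a::{real_inner,complete_space} \<Rightarrow> ereal"
  assumes G: "f \<in> Gamma0" and a: "f x0 = ereal a" and e: "e > 0"
  obtains w where "prox_potential f x0 w \<le> - a - (norm x0)\<^sup>2 / 2 + e"
proof -
  have "ereal (a + (norm x0)\<^sup>2 / 2 - e) < f x0 + ereal ((norm x0)\<^sup>2 / 2)" using a e by simp
  then obtain w where "a + (norm x0)\<^sup>2 / 2 - e < inner w (x0 - x0) - prox_potential f x0 w"
    by (rule prox_potential_biconjugate[OF G])
  then show thesis by (intro that[of w]) simp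
qed

lemma Gamma0_diff_le_if_prox_potential_le:
  fixes f g :: "'a::{real_inner,complete_space} \<Rightarrow> ereal"
  assumes f: "f \<in> Gamma0" and g: "g \<in> Gamma0" and a: "f x0 = ereal a" and b: "g x0 = ereal b"
    and le: "\<And>x. prox_potential f x0 x + a \<le> prox_potential g x0 x + b"
  shows "g y - g x0 \<le> f y - f x0"
proof (cases "f y")
  case (real c)
  show ?thesis
  proof (rule ccontr)
    assume "\<not> ?thesis"
    then have "ereal (c - a + b + (norm y)\<^sup>2 / 2) < g y + ereal ((norm y)\<^sup>2 / 2)"
      using real a b Gamma0D(3)[OF g, of y] by (cases "g y") auto
    then obtain x where x: "c - a + b + (norm y)\<^sup>2 / 2 < inner x (y - x0) - prox_potential g x0 x"
      by (rule prox_potential_biconjugate[OF g])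
    have "inner x (y - x0) - c - (norm y)\<^sup>2 / 2 \<le> prox_potential f x0 x"
      by (rule prox_potential_fenchel_young[OF f real])
    with le[of x] x show False by linarith
  qed
qed (use a Gamma0D(3)[OF f, of y] in auto)

theorem theorem2:
  fixes f g :: "'a::{real_inner, complete_space} \<Rightarrow> ereal" and x0 :: 'a
  assumes "f \<in> Gamma0" and "g \<in> Gamma0"
    and "x0 \<in> edom f \<inter> edom g"
    and "\<And>x. norm (prox f x - x0) \<le> norm (prox g x - x0)"
  shows "\<forall>x. g x - g x0 \<le> f x - f x0"
proof
  fix y
  obtain a where a: "f x0 = ereal a"
    using assms(3) Gamma0_real_valued[OF assms(1)] by (auto simp: edom_def)
  obtain b where b: "g x0 = ereal b"
    using assms(3) Gamma0_real_valued[OF assms(2)] by (auto simp: edom_def)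
  interpret smooth_convex_bounded_below "prox_potential g x0" "\<lambda>x. prox g x - x0" "- b - (norm x0)\<^sup>2 / 2"
    by (rule prox_potential_smooth_convex[OF assms(2) b])
  have "prox_potential f x0 x - (- a - (norm x0)\<^sup>2 / 2)
      \<le> prox_potential g x0 x - (- b - (norm x0)\<^sup>2 / 2)" for x
  proof (rule gradient_comparison)
    show "prox_potential f x0 x + inner (prox f x - x0) (z - x) \<le> prox_potential f x0 z" for x z
      by (rule prox_potential_subgradient[OF assms(1)])
    show "norm (prox f x - x0) \<le> norm (prox g x - x0)" for x by (rule assms(4))
    show "\<exists>w. prox_potential f x0 w \<le> - a - (norm x0)\<^sup>2 / 2 + e" if "e > 0" for e
      using prox_potential_near_inf[OF assms(1) a that] by blast
  qed
  then show "g y - g x0 \<le> f y - f x0"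
    by (intro Gamma0_diff_le_if_prox_potential_le[OF assms(1,2) a b]) simp
qed

end
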